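(* Let $A$ be a ${\mathbb K}$-algebra and let $R=A[X_1,\ldots,X_m]$ be the polynomial algebra over $A$ in $m$ commuting (central) variables. Then $$\operatorname{Z}(R)=\operatorname{Z}(A)[X_1,\ldots,X_m]\cong \operatorname{Z}(A)\otimes_{{\mathbb K}}{\mathbb K}[X_1,\ldots,X_m].$$ Assume in addition that $A$ is finitely generated as a ${\mathbb K}$-algebra and that $\operatorname{Der}(A)=\operatorname{InnDer}(A)\oplus M$ for some $\operatorname{Z}(A)$-submodule $M$ of $\operatorname{Der}(A)$. Then $$\operatorname{Der}(R)=\operatorname{InnDer}(R)\oplus \overline{M}\oplus\bigoplus_{j=1}^m \operatorname{Z}(R)\,\partial_j,$$ where each $D\in M$ is extended to a derivation of $R$ by setting $D(X_i)=0$ for all $i\in[1,m]$, $\overline M=\operatorname{Z}(R)M$ (so $\overline M\cong \operatorname{Z}(R)\otimes_{\operatorname{Z}(A)}M\cong {\mathbb K}[X_1,\ldots,X_m]\otimes_{{\mathbb K}}M$), and $\partial_j$ is the derivation of $R$ with $\partial_j(A)=0$ and $\partial_j(X_i)=\delta_{ij}$ for all $i,j\in[1,m]$.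
   Context: ${\mathbb K}$ is a field of characteristic $0$; all derivations are ${\mathbb K}$-linear. For a ${\mathbb K}$-algebra $B$, $\operatorname{Z}(B)$ is its center, $\operatorname{Der}(B)$ its Lie algebra of ${\mathbb K}$-derivations and $\operatorname{InnDer}(B)=\{\operatorname{ad}_x: x\in B\}$ its inner derivations, where $\operatorname{ad}_x(b)=xb-bx$. *)

theory Defs
  imports "HOL-Library.Poly_Mapping"
begin

definition center :: "'a::ring set" where
  "center = {z. \<forall>b. z * b = b * z}"

definition K_algebra :: "('k::field \<Rightarrow> 'a::ring_1 \<Rightarrow> 'a) \<Rightarrow> bool" where
  "K_algebra sc \<longleftrightarrow>
     (\<forall>c x y. sc c (x + y) = sc c x + sc c y) \<and>
     (\<forall>c d x. sc (c + d) x = sc c x + sc d x) \<and>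
     (\<forall>c d x. sc (c * d) x = sc c (sc d x)) \<and>
     (\<forall>x. sc 1 x = x) \<and>
     (\<forall>c x y. sc c (x * y) = sc c x * y \<and> sc c (x * y) = x * sc c y)"

definition derivations :: "('k \<Rightarrow> 'a::ring \<Rightarrow> 'a) \<Rightarrow> ('a \<Rightarrow> 'a) set" where
  "derivations sc = {D. (\<forall>x y. D (x + y) = D x + D y) \<and>
                        (\<forall>c x. D (sc c x) = sc c (D x)) \<and>
                        (\<forall>x y. D (x * y) = D x * y + x * D y)}"

definition ad :: "'a::ring \<Rightarrow> 'a \<Rightarrow> 'a" where
  "ad x = (\<lambda>b. x * b - b * x)"

definition inner_derivations :: "('a::ring \<Rightarrow> 'a) set" where
  "inner_derivations = range ad"

inductive_set subalg_gen :: "('k::field \<Rightarrow> 'a::ring_1 \<Rightarrow> 'a) \<Rightarrow> 'a set \<Rightarrow> 'a set"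
  for sc S where
  gen: "s \<in> S \<Longrightarrow> s \<in> subalg_gen sc S"
| one: "1 \<in> subalg_gen sc S"
| scal: "x \<in> subalg_gen sc S \<Longrightarrow> sc c x \<in> subalg_gen sc S"
| add: "x \<in> subalg_gen sc S \<Longrightarrow> y \<in> subalg_gen sc S \<Longrightarrow> x + y \<in> subalg_gen sc S"
| mult: "x \<in> subalg_gen sc S \<Longrightarrow> y \<in> subalg_gen sc S \<Longrightarrow> x * y \<in> subalg_gen sc S"

definition finitely_generated_algebra :: "('k::field \<Rightarrow> 'a::ring_1 \<Rightarrow> 'a) \<Rightarrow> bool" where
  "finitely_generated_algebra sc \<longleftrightarrow> (\<exists>S. finite S \<and> subalg_gen sc S = UNIV)"

definition center_submodule_of_derivations ::
  "('k \<Rightarrow> 'a::ring \<Rightarrow> 'a) \<Rightarrow> ('a \<Rightarrow> 'a) set \<Rightarrow> bool" where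
  "center_submodule_of_derivations sc M \<longleftrightarrow>
     M \<subseteq> derivations sc \<and> (\<lambda>x. 0) \<in> M \<and>
     (\<forall>D\<in>M. \<forall>E\<in>M. (\<lambda>x. D x + E x) \<in> M) \<and>
     (\<forall>z\<in>center. \<forall>D\<in>M. (\<lambda>x. z * D x) \<in> M)"

text \<open>The polynomial algebra A[X_j : j \<in> 'n] with central commuting variables:
  finitely supported maps from monomials (exponent vectors) to coefficients,
  with convolution product.\<close>
type_synonym ('n, 'a) mpoly = "('n \<Rightarrow>\<^sub>0 nat) \<Rightarrow>\<^sub>0 'a"

definition var :: "'n \<Rightarrow> ('n, 'a::ring_1) mpoly" where
  "var i = Poly_Mapping.single (Poly_Mapping.single i 1) 1"

definition poly_scal :: "('k \<Rightarrow> 'a::zero \<Rightarrow> 'a) \<Rightarrow> 'k \<Rightarrow> ('n, 'a) mpoly \<Rightarrow> ('n, 'a) mpoly" where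
  "poly_scal sc c p = Poly_Mapping.map (sc c) p"

text \<open>Extension of a derivation D of A to R with D(X_i) = 0: apply D coefficientwise.\<close>
definition coeff_ext :: "('a::zero \<Rightarrow> 'a) \<Rightarrow> ('n, 'a) mpoly \<Rightarrow> ('n, 'a) mpoly" where
  "coeff_ext D p = Poly_Mapping.map D p"

text \<open>Partial derivative with respect to X_j (kills A, sends X_i to delta_ij).\<close>
definition partial_var :: "'n \<Rightarrow> ('n, 'a::ring_1) mpoly \<Rightarrow> ('n, 'a) mpoly" where
  "partial_var j p =
     (\<Sum>(mm::'n \<Rightarrow>\<^sub>0 nat)\<in>Poly_Mapping.keys p. Poly_Mapping.single (mm - Poly_Mapping.single j 1)
                    (of_nat (Poly_Mapping.lookup mm j) * Poly_Mapping.lookup p mm))"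

text \<open>\<open>Mbar = Z(R) M\<close>: the Z(R)-span of the extensions of the elements of M.\<close>
definition ext_span :: "('a::ring_1 \<Rightarrow> 'a) set \<Rightarrow> (('n, 'a) mpoly \<Rightarrow> ('n, 'a) mpoly) set" where
  "ext_span M = {(\<lambda>p. \<Sum>k<(n::nat). (z :: nat \<Rightarrow> ('n, 'a) mpoly) k * coeff_ext (Ds k) p) | n z Ds.
                   \<forall>k<n. z k \<in> center \<and> Ds k \<in> M}"

end

theory Submission
  imports Defs "HOL.Modules"
begin

text \<open>
  Since the variables are central, a polynomial commutes with everything iff it commutes with
  the constants, i.e. iff all its coefficients are central.

  A derivation \<open>\<delta>\<close> of \<open>R\<close> maps each central \<open>X\<^sub>j\<close> into \<open>Z(R)\<close>, so
  \<open>\<delta>' = \<delta> - \<Sum>\<^sub>j \<delta>(X\<^sub>j) \<partial>\<^sub>j\<close> is a derivation killing all variables, hence determined by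
  its values on \<open>A\<close>. For each monomial \<open>\<mu>\<close>, taking the \<open>\<mu>\<close>-coefficient of \<open>\<delta>'(a)\<close> is a
  derivation of \<open>A\<close>, so it equals \<open>ad x\<^sub>\<mu> + N\<^sub>\<mu>\<close>; as \<open>A\<close> is finitely generated only
  finitely many \<open>\<mu>\<close> occur, and \<open>\<delta>' = ad (\<Sum>\<^sub>\<mu> x\<^sub>\<mu> X\<^sup>\<mu>) + \<Sum>\<^sub>\<mu> X\<^sup>\<mu> N\<^sub>\<mu>\<close>.
  For directness, evaluating a vanishing combination at \<open>X\<^sub>j\<close> kills the \<open>\<partial>\<^sub>j\<close>-part, and on
  constants the \<open>\<mu>\<close>-coefficient of \<open>ad x + N = 0\<close> exhibits \<open>ad x\<^sub>\<mu>\<close> as an element of \<open>M\<close>,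
  so \<open>x\<^sub>\<mu>\<close> is central.
\<close>

lemma lookup_map_of_zero:
  "f 0 = 0 \<Longrightarrow> Poly_Mapping.lookup (Poly_Mapping.map f p) k = f (Poly_Mapping.lookup p k)"
  by (simp add: Poly_Mapping.map.rep_eq when_def)

lemma additive_poly_mapping_map:
  "additive f \<Longrightarrow> additive (Poly_Mapping.map f :: ('b \<Rightarrow>\<^sub>0 'a::ab_group_add) \<Rightarrow> _)"
  by (rule additive.intro, rule poly_mapping_eqI)
    (simp add: lookup_map_of_zero additive.zero additive.add lookup_add)

lemma additive_mult_left: "additive (\<lambda>x. x * (y::'a::ring))"
  by (rule additive.intro) (simp add: distrib_right)

lemma additive_mult_right: "additive (\<lambda>y. (x::'a::ring) * y)"
  by (rule additive.intro) (simp add: distrib_left)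

lemma poly_mapping_sum_single:
  fixes p :: "'b \<Rightarrow>\<^sub>0 'a::comm_monoid_add"
  assumes "finite S" and "Poly_Mapping.keys p \<subseteq> S"
  shows "p = (\<Sum>\<mu>\<in>S. Poly_Mapping.single \<mu> (Poly_Mapping.lookup p \<mu>))"
proof (rule poly_mapping_eqI)
  fix k
  have "(\<Sum>\<mu>\<in>S. Poly_Mapping.lookup (Poly_Mapping.single \<mu> (Poly_Mapping.lookup p \<mu>)) k)
      = (\<Sum>\<mu>\<in>S. if \<mu> = k then Poly_Mapping.lookup p \<mu> else 0)"
    by (rule sum.cong) (auto simp: lookup_single when_def)
  also have "\<dots> = Poly_Mapping.lookup p k"
    using assms by (auto simp: in_keys_iff)
  finally show "Poly_Mapping.lookup p k
      = Poly_Mapping.lookup (\<Sum>\<mu>\<in>S. Poly_Mapping.single \<mu> (Poly_Mapping.lookup p \<mu>)) k"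
    by (simp add: lookup_sum)
qed

lemma additive_poly_mapping_eqI:
  fixes f g :: "('b \<Rightarrow>\<^sub>0 'a::ab_group_add) \<Rightarrow> 'c::ab_group_add"
  assumes "additive f" and "additive g"
    and "\<And>\<mu> a. f (Poly_Mapping.single \<mu> a) = g (Poly_Mapping.single \<mu> a)"
  shows "f = g"
proof
  fix p :: "'b \<Rightarrow>\<^sub>0 'a"
  let ?S = "Poly_Mapping.keys p"
  have p: "p = (\<Sum>\<mu>\<in>?S. Poly_Mapping.single \<mu> (Poly_Mapping.lookup p \<mu>))"
    by (rule poly_mapping_sum_single) auto
  have "f p = f (\<Sum>\<mu>\<in>?S. Poly_Mapping.single \<mu> (Poly_Mapping.lookup p \<mu>))"
    using p by (rule arg_cong)
  also have "\<dots> = g (\<Sum>\<mu>\<in>?S. Poly_Mapping.single \<mu> (Poly_Mapping.lookup p \<mu>))"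
    using assms by (simp add: additive.sum)
  also have "\<dots> = g p"
    using p[symmetric] by (rule arg_cong)
  finally show "f p = g p" .
qed

lemma biadditive_poly_mapping_eqI:
  fixes F G :: "('b \<Rightarrow>\<^sub>0 'a::ab_group_add) \<Rightarrow> ('b \<Rightarrow>\<^sub>0 'a) \<Rightarrow> 'c::ab_group_add"
  assumes "\<And>q. additive (\<lambda>p. F p q)" and "\<And>p. additive (F p)"
    and "\<And>q. additive (\<lambda>p. G p q)" and "\<And>p. additive (G p)"
    and "\<And>\<mu> a \<nu> b. F (Poly_Mapping.single \<mu> a) (Poly_Mapping.single \<nu> b)
                   = G (Poly_Mapping.single \<mu> a) (Poly_Mapping.single \<nu> b)"
  shows "F p q = G p q"
proof -
  have "(\<lambda>p. F p (Poly_Mapping.single \<nu> b)) = (\<lambda>p. G p (Poly_Mapping.single \<nu> b))" for \<nu> b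
    by (rule additive_poly_mapping_eqI) (use assms in auto)
  then have "F p = G p"
    by (intro additive_poly_mapping_eqI) (use assms in \<open>auto dest: fun_cong\<close>)
  then show ?thesis by simp
qed

lemma leibniz_poly_mappingI:
  fixes D :: "('b::monoid_add \<Rightarrow>\<^sub>0 'a::ring) \<Rightarrow> ('b \<Rightarrow>\<^sub>0 'a)"
  assumes D: "additive D"
    and single: "\<And>\<mu> a \<nu> b. D (Poly_Mapping.single \<mu> a * Poly_Mapping.single \<nu> b)
      = D (Poly_Mapping.single \<mu> a) * Poly_Mapping.single \<nu> b
        + Poly_Mapping.single \<mu> a * D (Poly_Mapping.single \<nu> b)"
  shows "D (p * q) = D p * q + p * D q"
  by (rule biadditive_poly_mapping_eqI[where F = "\<lambda>p q. D (p * q)" and G = "\<lambda>p q. D p * q + p * D q"])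
    (auto simp: additive_def additive.add[OF D] distrib_left distrib_right single algebra_simps)

lemma lookup_mult_const_left:
  "Poly_Mapping.lookup (Poly_Mapping.single 0 a * (p :: 'b::monoid_add \<Rightarrow>\<^sub>0 'a::ring)) \<mu>
   = a * Poly_Mapping.lookup p \<mu>"
  by (simp add: mult_map_scale_conv_mult[symmetric] lookup_map_of_zero)

lemma lookup_mult_const_right:
  "Poly_Mapping.lookup ((p :: 'b::monoid_add \<Rightarrow>\<^sub>0 'a::ring) * Poly_Mapping.single 0 a) \<mu>
   = Poly_Mapping.lookup p \<mu> * a"
proof -
  have "(\<lambda>p. p * Poly_Mapping.single 0 a) = Poly_Mapping.map (\<lambda>x. x * a)"
    by (rule additive_poly_mapping_eqI)
      (auto simp: additive_mult_left additive_poly_mapping_map mult_single)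
  then have "p * Poly_Mapping.single 0 a = Poly_Mapping.map (\<lambda>x. x * a) p"
    by (rule fun_cong)
  then show ?thesis by (simp add: lookup_map_of_zero)
qed

section \<open>The centre of a monoid ring\<close>

lemma center_sum: "(\<And>i. i \<in> I \<Longrightarrow> f i \<in> center) \<Longrightarrow> sum f I \<in> center"
  by (simp add: center_def sum_distrib_left sum_distrib_right)

lemma single_in_center:
  assumes "a \<in> center"
  shows "Poly_Mapping.single \<mu> a \<in> (center :: ('b::comm_monoid_add \<Rightarrow>\<^sub>0 'a::ring) set)"
proof -
  have "(\<lambda>q. Poly_Mapping.single \<mu> a * q) = (\<lambda>q. q * Poly_Mapping.single \<mu> a)"
    by (rule additive_poly_mapping_eqI)
      (use assms in \<open>auto simp: additive_mult_left additive_mult_right mult_single center_def add.commute\<close>)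
  then show ?thesis by (simp add: center_def fun_eq_iff)
qed

lemma lookup_in_center_if_commutes_with_constants:
  fixes p :: "'b::monoid_add \<Rightarrow>\<^sub>0 'a::ring"
  assumes "\<And>a. p * Poly_Mapping.single 0 a = Poly_Mapping.single 0 a * p"
  shows "Poly_Mapping.lookup p \<mu> \<in> center"
  unfolding center_def
proof (intro CollectI allI)
  fix a
  have "Poly_Mapping.lookup (p * Poly_Mapping.single 0 a) \<mu>
      = Poly_Mapping.lookup (Poly_Mapping.single 0 a * p) \<mu>"
    by (simp add: assms)
  then show "Poly_Mapping.lookup p \<mu> * a = a * Poly_Mapping.lookup p \<mu>"
    by (simp add: lookup_mult_const_left lookup_mult_const_right)
qed

lemma in_center_if_lookups_in_center:
  fixes p :: "'b::comm_monoid_add \<Rightarrow>\<^sub>0 'a::ring"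
  assumes "\<And>\<mu>. Poly_Mapping.lookup p \<mu> \<in> center"
  shows "p \<in> center"
proof -
  have "p = (\<Sum>\<mu>\<in>Poly_Mapping.keys p. Poly_Mapping.single \<mu> (Poly_Mapping.lookup p \<mu>))"
    by (rule poly_mapping_sum_single) auto
  also have "\<dots> \<in> center"
    by (intro center_sum single_in_center assms)
  finally show ?thesis .
qed

lemma center_poly_mapping_iff:
  "(p :: 'b::comm_monoid_add \<Rightarrow>\<^sub>0 'a::ring) \<in> center \<longleftrightarrow> (\<forall>\<mu>. Poly_Mapping.lookup p \<mu> \<in> center)"
  using lookup_in_center_if_commutes_with_constants in_center_if_lookups_in_center
  unfolding center_def by blast

lemma in_center_if_commutes_with_constants:
  "(\<And>a. p * Poly_Mapping.single 0 a = Poly_Mapping.single 0 a * p)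
   \<Longrightarrow> (p :: 'b::comm_monoid_add \<Rightarrow>\<^sub>0 'a::ring) \<in> center"
  by (intro in_center_if_lookups_in_center lookup_in_center_if_commutes_with_constants)

lemma var_in_center: "(var j :: ('n, 'a::ring_1) mpoly) \<in> center"
  unfolding var_def by (rule single_in_center) (simp add: center_def)

section \<open>Derivations of an algebra\<close>

lemma K_algebra_additive: "K_algebra s \<Longrightarrow> additive (s c)"
  unfolding K_algebra_def by (simp add: additive.intro)

lemma K_algebra_mult_left: "K_algebra s \<Longrightarrow> s c (x * y) = s c x * y"
  unfolding K_algebra_def by blast

lemma K_algebra_mult_right: "K_algebra s \<Longrightarrow> s c (x * y) = x * s c y"
  unfolding K_algebra_def by blast

lemma derivationsI:
  assumes "additive D" and "\<And>c x. D (s c x) = s c (D x)"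
    and "\<And>x y. D (x * y) = D x * y + x * D y"
  shows "D \<in> derivations s"
  using assms unfolding derivations_def additive_def by blast

lemma derivationsD:
  assumes "D \<in> derivations s"
  shows "additive D" and "D (s c x) = s c (D x)" and "D (x * y) = D x * y + x * D y"
  using assms unfolding derivations_def additive_def by blast+

lemma derivation_one: "D \<in> derivations s \<Longrightarrow> D (1::'a::ring_1) = 0"
  using derivationsD(3)[of D s 1 1] by simp

lemma derivation_power_eq_zero:
  assumes D: "D \<in> derivations s" and "D x = 0"
  shows "D (x ^ k :: 'a::ring_1) = 0"
  by (induction k) (simp_all add: derivation_one[OF D] derivationsD(3)[OF D] assms(2))

lemma derivation_vanishes_on_subalg_gen:
  assumes "K_algebra s" and D: "D \<in> derivations s" and gen: "\<And>x. x \<in> S \<Longrightarrow> D x = 0"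
    and "x \<in> subalg_gen s S"
  shows "D x = 0"
  using \<open>x \<in> subalg_gen s S\<close>
proof induction
  case one
  then show ?case by (rule derivation_one[OF D])
qed (simp_all add: gen derivationsD(2,3)[OF D] additive.add[OF derivationsD(1)[OF D]]
    additive.zero[OF K_algebra_additive[OF assms(1)]])

lemma derivations_add:
  assumes "K_algebra s" and "D \<in> derivations s" and "E \<in> derivations s"
  shows "(\<lambda>x. D x + E x) \<in> derivations s"
  using assms by (intro derivationsI)
    (auto simp: additive_def derivationsD additive.add[OF derivationsD(1)]
      additive.add[OF K_algebra_additive] algebra_simps)

lemma derivations_diff:
  assumes "K_algebra s" and "D \<in> derivations s" and "E \<in> derivations s"
  shows "(\<lambda>x. D x - E x) \<in> derivations s"
  using assms by (intro derivationsI)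
    (auto simp: additive_def derivationsD additive.add[OF derivationsD(1)]
      additive.diff[OF K_algebra_additive] algebra_simps)

lemma derivations_sum:
  assumes "K_algebra s" and "\<And>i. i \<in> I \<Longrightarrow> D i \<in> derivations s"
  shows "(\<lambda>x. \<Sum>i\<in>I. D i x) \<in> derivations s"
  using assms(2)
proof (induction I rule: infinite_finite_induct)
  case (insert i I)
  then show ?case using derivations_add[OF assms(1), of "D i" "\<lambda>x. \<Sum>i\<in>I. D i x"] by simp
qed (auto intro!: derivationsI additive.intro simp: additive.zero[OF K_algebra_additive[OF assms(1)]])

lemma derivations_center_mult:
  assumes "K_algebra s" and z: "z \<in> center" and D: "D \<in> derivations s"
  shows "(\<lambda>x. z * D x) \<in> derivations s"
proof (rule derivationsI)
  show "additive (\<lambda>x. z * D x)"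
    using additive.add[OF derivationsD(1)[OF D]] by (simp add: additive.intro distrib_left)
  show "z * D (s c x) = s c (z * D x)" for c x
    by (simp add: derivationsD(2)[OF D] K_algebra_mult_right[OF assms(1)])
  show "z * D (x * y) = z * D x * y + x * (z * D y)" for x y
  proof -
    have "z * x = x * z"
      using z by (simp add: center_def)
    then show ?thesis
      by (simp add: derivationsD(3)[OF D] distrib_left mult.assoc[symmetric])
  qed
qed

lemma ad_in_derivations:
  assumes "K_algebra s"
  shows "ad x \<in> derivations s"
proof (rule derivationsI)
  show "additive (ad x)"
    by (rule additive.intro) (simp add: ad_def algebra_simps)
  show "ad x (s c y) = s c (ad x y)" for c y
    by (simp add: ad_def additive.diff[OF K_algebra_additive[OF assms]]
      K_algebra_mult_right[OF assms, of c x y] K_algebra_mult_left[OF assms, of c y x])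
  show "ad x (y * z) = ad x y * z + y * ad x z" for y z
    by (simp add: ad_def algebra_simps)
qed

lemma ad_central_eq_zero: "y \<in> center \<Longrightarrow> ad x y = 0"
  by (simp add: ad_def center_def)

lemma ad_eq_zero_iff_center: "ad x = (\<lambda>y. 0) \<longleftrightarrow> x \<in> center"
  by (simp add: ad_def center_def fun_eq_iff)

section \<open>Derivations of the polynomial algebra\<close>

lemma additive_poly_scal: "K_algebra sc \<Longrightarrow> additive (poly_scal sc c)"
  unfolding poly_scal_def by (intro additive_poly_mapping_map K_algebra_additive)

lemma poly_scal_single [simp]:
  "K_algebra sc \<Longrightarrow> poly_scal sc c (Poly_Mapping.single \<mu> a) = Poly_Mapping.single \<mu> (sc c a)"
  unfolding poly_scal_def by (simp add: additive.zero[OF K_algebra_additive])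

lemma lookup_poly_scal:
  "K_algebra sc \<Longrightarrow> Poly_Mapping.lookup (poly_scal sc c p) \<mu> = sc c (Poly_Mapping.lookup p \<mu>)"
  unfolding poly_scal_def by (simp add: lookup_map_of_zero additive.zero[OF K_algebra_additive])

lemma K_algebra_poly_scal:
  assumes alg: "K_algebra sc"
  shows "K_algebra (poly_scal sc :: 'k::field \<Rightarrow> ('n, 'a::ring_1) mpoly \<Rightarrow> _)"
proof -
  have ax: "sc c (x + y) = sc c x + sc c y" "sc (c + d) x = sc c x + sc d x"
    "sc (c * d) x = sc c (sc d x)" "sc 1 x = x" for c d x y
    using alg unfolding K_algebra_def by blast+
  have add: "additive (\<lambda>p. poly_scal sc c (f p))" if "additive f" for c and f :: "('n, 'a) mpoly \<Rightarrow> _"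
    using that by (simp add: additive_def additive.add[OF additive_poly_scal[OF alg]])
  have mult: "poly_scal sc c (p * q) = poly_scal sc c p * q \<and> poly_scal sc c (p * q) = p * poly_scal sc c q"
    for c and p q :: "('n, 'a) mpoly"
  proof
    show "poly_scal sc c (p * q) = poly_scal sc c p * q"
      by (rule biadditive_poly_mapping_eqI[where F = "\<lambda>p q. poly_scal sc c (p * q)"])
        (auto intro!: add simp: additive_mult_left additive_mult_right additive_def
          additive.add[OF additive_poly_scal[OF alg]] distrib_left distrib_right
          mult_single alg K_algebra_mult_left)
    show "poly_scal sc c (p * q) = p * poly_scal sc c q"
      by (rule biadditive_poly_mapping_eqI[where F = "\<lambda>p q. poly_scal sc c (p * q)"])
        (auto intro!: add simp: additive_mult_left additive_mult_right additive_def
          additive.add[OF additive_poly_scal[OF alg]] distrib_left distrib_right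
          mult_single alg K_algebra_mult_right)
  qed
  show ?thesis
    unfolding K_algebra_def
    by (intro conjI allI mult additive.add[OF additive_poly_scal[OF alg]])
      (auto intro!: poly_mapping_eqI simp: lookup_poly_scal[OF alg] lookup_add ax)
qed

lemma derivations_poly_mappingI:
  fixes D :: "('n, 'a::ring_1) mpoly \<Rightarrow> ('n, 'a) mpoly"
  assumes alg: "K_algebra sc" and D: "additive D"
    and scal: "\<And>c \<mu> a. D (Poly_Mapping.single \<mu> (sc c a)) = poly_scal sc c (D (Poly_Mapping.single \<mu> a))"
    and leibniz: "\<And>\<mu> a \<nu> b. D (Poly_Mapping.single \<mu> a * Poly_Mapping.single \<nu> b)
      = D (Poly_Mapping.single \<mu> a) * Poly_Mapping.single \<nu> b
        + Poly_Mapping.single \<mu> a * D (Poly_Mapping.single \<nu> b)"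
  shows "D \<in> derivations (poly_scal sc)"
proof (rule derivationsI[OF D])
  show "D (p * q) = D p * q + p * D q" for p q
    using D leibniz by (rule leibniz_poly_mappingI)
  have "(\<lambda>p. D (poly_scal sc c p)) = (\<lambda>p. poly_scal sc c (D p))" for c
    by (rule additive_poly_mapping_eqI)
      (simp_all add: additive_def additive.add[OF D] additive.add[OF additive_poly_scal[OF alg]] alg scal)
  then show "D (poly_scal sc c p) = poly_scal sc c (D p)" for c p
    by (rule fun_cong)
qed

lemma partial_var_eq_sum_superset:
  assumes "finite S" and "Poly_Mapping.keys p \<subseteq> S"
  shows "partial_var j p = (\<Sum>m\<in>S. Poly_Mapping.single (m - Poly_Mapping.single j 1)
    (of_nat (Poly_Mapping.lookup m j) * Poly_Mapping.lookup p m))"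
  unfolding partial_var_def
  by (rule sum.mono_neutral_left) (use assms in \<open>auto simp: in_keys_iff\<close>)

lemma additive_partial_var: "additive (partial_var j :: ('n, 'a::ring_1) mpoly \<Rightarrow> _)"
proof
  fix p q :: "('n, 'a) mpoly"
  let ?S = "Poly_Mapping.keys p \<union> Poly_Mapping.keys q"
  have "Poly_Mapping.keys (p + q) \<subseteq> ?S"
    by (rule keys_add)
  then show "partial_var j (p + q) = partial_var j p + partial_var j q"
    by (simp add: partial_var_eq_sum_superset[of ?S] lookup_add distrib_left single_add sum.distrib)
qed

lemma partial_var_single:
  "partial_var j (Poly_Mapping.single m a :: ('n, 'a::ring_1) mpoly)
   = Poly_Mapping.single (m - Poly_Mapping.single j 1) (of_nat (Poly_Mapping.lookup m j) * a)"
  by (subst partial_var_eq_sum_superset[of "{m}"]) auto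

lemma partial_var_var: "partial_var j (var k :: ('n, 'a::ring_1) mpoly) = (if j = k then 1 else 0)"
  by (auto simp: var_def partial_var_single lookup_single when_def)

lemma diff_single_add_commute:
  fixes m n :: "'n \<Rightarrow>\<^sub>0 nat"
  assumes "Poly_Mapping.lookup m j \<noteq> 0"
  shows "m - Poly_Mapping.single j 1 + n = m + n - Poly_Mapping.single j 1"
  using assms by (intro poly_mapping_eqI) (auto simp: lookup_add lookup_minus lookup_single when_def)

text \<open>If \<open>m\<^sub>j = 0\<close> the truncated exponent \<open>m - e\<^sub>j\<close> is meaningless, but then the coefficient vanishes.\<close>

lemma partial_var_single_mult_single:
  "partial_var j (Poly_Mapping.single m a) * Poly_Mapping.single n b
   = Poly_Mapping.single (m + n - Poly_Mapping.single j 1)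
       (of_nat (Poly_Mapping.lookup m j) * (a * b) :: 'a::ring_1)"
proof (cases "Poly_Mapping.lookup m j = 0")
  case False
  show ?thesis
    by (simp only: partial_var_single mult_single diff_single_add_commute[OF False] mult.assoc)
qed (simp add: partial_var_single)

lemma single_mult_partial_var_single:
  "Poly_Mapping.single m a * partial_var j (Poly_Mapping.single n b)
   = Poly_Mapping.single (m + n - Poly_Mapping.single j 1)
       (of_nat (Poly_Mapping.lookup n j) * (a * b) :: 'a::ring_1)"
proof (cases "Poly_Mapping.lookup n j = 0")
  case False
  have "m + (n - Poly_Mapping.single j 1) = m + n - Poly_Mapping.single j 1"
    using diff_single_add_commute[OF False, of m] by (simp add: add.commute)
  moreover have "a * (of_nat (Poly_Mapping.lookup n j) * b) = of_nat (Poly_Mapping.lookup n j) * (a * b)"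
    by (metis mult.assoc mult_of_nat_commute)
  ultimately show ?thesis
    by (simp only: partial_var_single mult_single)
qed (simp add: partial_var_single)

lemma partial_var_in_derivations:
  assumes alg: "K_algebra sc"
  shows "partial_var j \<in> derivations (poly_scal sc)"
proof (rule derivations_poly_mappingI[OF alg additive_partial_var])
  show "partial_var j (Poly_Mapping.single \<mu> (sc c a))
      = poly_scal sc c (partial_var j (Poly_Mapping.single \<mu> a))" for c \<mu> a
    by (simp add: partial_var_single alg K_algebra_mult_right)
  show "partial_var j (Poly_Mapping.single \<mu> a * Poly_Mapping.single \<nu> b)
      = partial_var j (Poly_Mapping.single \<mu> a) * Poly_Mapping.single \<nu> b
        + Poly_Mapping.single \<mu> a * partial_var j (Poly_Mapping.single \<nu> b)" for \<mu> a \<nu> b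
    unfolding partial_var_single_mult_single single_mult_partial_var_single
    by (simp add: mult_single partial_var_single lookup_add distrib_right single_add)
qed

lemma coeff_ext_single: "D 0 = 0 \<Longrightarrow> coeff_ext D (Poly_Mapping.single \<mu> a) = Poly_Mapping.single \<mu> (D a)"
  unfolding coeff_ext_def by simp

lemma coeff_ext_var:
  "D \<in> derivations s \<Longrightarrow> coeff_ext D (var j :: ('n, 'a::ring_1) mpoly) = 0"
  by (simp add: var_def coeff_ext_single derivation_one additive.zero[OF derivationsD(1)])

lemma coeff_ext_in_derivations:
  assumes alg: "K_algebra sc" and D: "D \<in> derivations sc"
  shows "coeff_ext D \<in> derivations (poly_scal sc)"
proof (rule derivations_poly_mappingI[OF alg])
  note D0 = additive.zero[OF derivationsD(1)[OF D]]
  show "additive (coeff_ext D)"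
    unfolding coeff_ext_def by (intro additive_poly_mapping_map derivationsD(1)[OF D])
  show "coeff_ext D (Poly_Mapping.single \<mu> (sc c a)) = poly_scal sc c (coeff_ext D (Poly_Mapping.single \<mu> a))"
    for c \<mu> a
    by (simp add: coeff_ext_single D0 alg derivationsD(2)[OF D])
  show "coeff_ext D (Poly_Mapping.single \<mu> a * Poly_Mapping.single \<nu> b)
      = coeff_ext D (Poly_Mapping.single \<mu> a) * Poly_Mapping.single \<nu> b
        + Poly_Mapping.single \<mu> a * coeff_ext D (Poly_Mapping.single \<nu> b)" for \<mu> a \<nu> b
    by (simp add: coeff_ext_single D0 mult_single derivationsD(3)[OF D] single_add)
qed

lemma single_single_eq_var_power:
  "Poly_Mapping.single (Poly_Mapping.single j k) 1 = (var j ^ k :: ('n, 'a::ring_1) mpoly)"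
proof (induction k)
  case (Suc k)
  have "Poly_Mapping.single j (Suc k) = Poly_Mapping.single j 1 + Poly_Mapping.single j k"
    by (simp add: single_add[symmetric])
  then show ?case
    unfolding power_Suc Suc.IH[symmetric] by (simp add: var_def mult_single)
qed simp

lemma derivation_monomial_eq_zero:
  assumes D: "D \<in> derivations s" and vars: "\<And>j. D (var j) = 0"
  shows "D (Poly_Mapping.single \<mu> 1 :: ('n, 'a::ring_1) mpoly) = 0"
proof (induction \<mu> rule: update_induct)
  case const
  then show ?case using derivation_one[OF D] by simp
next
  case (update \<mu> j k)
  have "Poly_Mapping.update j k \<mu> = \<mu> + Poly_Mapping.single j k"
    using update.hyps(1)
    by (intro poly_mapping_eqI) (auto simp: lookup_update lookup_add lookup_single when_def in_keys_iff)
  then have "Poly_Mapping.single (Poly_Mapping.update j k \<mu>) 1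
      = Poly_Mapping.single \<mu> 1 * (var j ^ k :: ('n, 'a) mpoly)"
    by (simp add: mult_single single_single_eq_var_power[symmetric])
  then show ?case
    by (simp add: update.IH derivationsD(3)[OF D] derivation_power_eq_zero[OF D vars])
qed

lemma derivations_vanishing_on_vars_eqI:
  fixes D E :: "('n, 'a::ring_1) mpoly \<Rightarrow> ('n, 'a) mpoly"
  assumes D: "D \<in> derivations s" and E: "E \<in> derivations s"
    and "\<And>j. D (var j) = 0" and "\<And>j. E (var j) = 0"
    and on_constants: "\<And>a. D (Poly_Mapping.single 0 a) = E (Poly_Mapping.single 0 a)"
  shows "D = E"
proof (rule additive_poly_mapping_eqI[OF derivationsD(1)[OF D] derivationsD(1)[OF E]])
  fix \<mu> :: "'n \<Rightarrow>\<^sub>0 nat" and a :: 'a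
  have "Poly_Mapping.single \<mu> a = Poly_Mapping.single 0 a * Poly_Mapping.single \<mu> (1::'a)"
    by (simp add: mult_single)
  then show "D (Poly_Mapping.single \<mu> a) = E (Poly_Mapping.single \<mu> a)"
    using assms by (simp add: derivationsD(3) derivation_monomial_eq_zero)
qed

lemma derivation_var_in_center:
  assumes D: "D \<in> derivations s"
  shows "D (var j :: ('n, 'a::ring_1) mpoly) \<in> center"
proof (rule in_center_if_commutes_with_constants)
  fix a
  let ?a = "Poly_Mapping.single 0 a :: ('n, 'a) mpoly"
  have "var j \<in> (center :: ('n, 'a) mpoly set)"
    by (rule var_in_center)
  then have "var j * ?a = ?a * var j" and "var j * D ?a = D ?a * var j"
    unfolding center_def by auto
  then have "D (var j) * ?a + D ?a * var j = D ?a * var j + ?a * D (var j)"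
    using derivationsD(3)[OF D, of "var j" ?a] derivationsD(3)[OF D, of ?a "var j"] by simp
  then show "D (var j) * ?a = ?a * D (var j)"
    by (simp add: add.commute)
qed

lemma center_submodule_sum:
  assumes M: "center_submodule_of_derivations s M"
    and "finite I" and "\<And>i. i \<in> I \<Longrightarrow> c i \<in> center \<and> D i \<in> M"
  shows "(\<lambda>x. \<Sum>i\<in>I. c i * D i x) \<in> M"
  using assms(2,3)
proof (induction I rule: finite_induct)
  case empty
  then show ?case using M by (simp add: center_submodule_of_derivations_def)
next
  case (insert i I)
  then have "(\<lambda>x. c i * D i x) \<in> M" and "(\<lambda>x. \<Sum>i\<in>I. c i * D i x) \<in> M"
    using M by (auto simp: center_submodule_of_derivations_def)
  then show ?case
    using M insert.hyps by (simp add: center_submodule_of_derivations_def)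
qed

lemma center_submodule_uminus:
  fixes M :: "('a::ring_1 \<Rightarrow> 'a) set"
  assumes M: "center_submodule_of_derivations s M" and "D \<in> M"
  shows "(\<lambda>x. - D x) \<in> M"
proof -
  have "(-1::'a) \<in> center"
    by (simp add: center_def)
  then have "(\<lambda>x. -1 * D x) \<in> M"
    using assms unfolding center_submodule_of_derivations_def by blast
  then show ?thesis
    by simp
qed

lemma ext_span_subset_derivations:
  assumes alg: "K_algebra sc" and "M \<subseteq> derivations sc"
  shows "ext_span M \<subseteq> derivations (poly_scal sc :: _ \<Rightarrow> ('n, 'a::ring_1) mpoly \<Rightarrow> _)"
  using assms unfolding ext_span_def
  by (auto intro!: derivations_sum derivations_center_mult coeff_ext_in_derivations K_algebra_poly_scal)

lemma ext_spanI:
  fixes n :: nat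
  assumes "\<And>k. k < n \<Longrightarrow> z k \<in> center \<and> Ds k \<in> M"
  shows "(\<lambda>p. \<Sum>k<n. z k * coeff_ext (Ds k) p) \<in> ext_span M"
  unfolding ext_span_def using assms by (intro CollectI exI[of _ n] exI[of _ z] exI[of _ Ds]) simp

lemma ext_span_var:
  assumes "M \<subseteq> derivations s" and "N \<in> ext_span M"
  shows "N (var j :: ('n, 'a::ring_1) mpoly) = 0"
proof -
  from assms(2) obtain n z Ds where N: "N = (\<lambda>p. \<Sum>k<(n::nat). z k * coeff_ext (Ds k) p)"
    and zD: "\<forall>k<n. z k \<in> center \<and> Ds k \<in> M"
    unfolding ext_span_def by blast
  have "coeff_ext (Ds k) (var j :: ('n, 'a) mpoly) = 0" if "k < n" for k
    using zD that assms(1) by (auto intro: coeff_ext_var)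
  then show ?thesis
    by (simp add: N)
qed

lemma ext_span_finite_sum:
  assumes "finite F" and "\<And>\<mu>. \<mu> \<in> F \<Longrightarrow> c \<mu> \<in> center \<and> D \<mu> \<in> M"
  shows "(\<lambda>p. \<Sum>\<mu>\<in>F. c \<mu> * coeff_ext (D \<mu>) p) \<in> ext_span M"
proof -
  obtain h where h: "bij_betw h {..<card F} F"
    using ex_bij_betw_nat_finite[OF assms(1)] lessThan_atLeast0 by metis
  have "(\<lambda>p. \<Sum>\<mu>\<in>F. c \<mu> * coeff_ext (D \<mu>) p) = (\<lambda>p. \<Sum>k<card F. c (h k) * coeff_ext (D (h k)) p)"
    by (rule ext, rule sum.reindex_bij_betw[OF h, symmetric])
  moreover have "(\<lambda>p. \<Sum>k<card F. c (h k) * coeff_ext (D (h k)) p) \<in> ext_span M"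
    using assms(2) bij_betwE[OF h] by (intro ext_spanI) auto
  ultimately show ?thesis
    by simp
qed

lemma lookup_ext_span_const:
  assumes M: "center_submodule_of_derivations s M" and "N \<in> ext_span M"
  shows "(\<lambda>a. Poly_Mapping.lookup (N (Poly_Mapping.single 0 a :: ('n, 'a::ring_1) mpoly)) \<mu>) \<in> M"
proof -
  from \<open>N \<in> ext_span M\<close> obtain n z Ds
    where N: "N = (\<lambda>p. \<Sum>k<(n::nat). z k * coeff_ext (Ds k) p)"
      and zD: "\<forall>k<n. z k \<in> center \<and> Ds k \<in> M"
    unfolding ext_span_def by blast
  have Ds0: "Ds k 0 = 0" if "k < n" for k
    using zD that M additive.zero[OF derivationsD(1)]
    unfolding center_submodule_of_derivations_def by blast
  have "Poly_Mapping.lookup (N (Poly_Mapping.single 0 a)) \<mu>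
      = (\<Sum>k<n. Poly_Mapping.lookup (z k) \<mu> * Ds k a)" for a
    unfolding N lookup_sum
    by (rule sum.cong) (simp_all add: coeff_ext_single Ds0 lookup_mult_const_right)
  moreover have "(\<lambda>a. \<Sum>k<n. Poly_Mapping.lookup (z k) \<mu> * Ds k a) \<in> M"
    by (rule center_submodule_sum[OF M]) (use zD in \<open>auto simp: center_poly_mapping_iff\<close>)
  ultimately show ?thesis
    by simp
qed

section \<open>Decomposition of the derivations of the polynomial algebra\<close>

lemma lookup_ad_const:
  "Poly_Mapping.lookup (ad x (Poly_Mapping.single 0 a)) \<mu> = ad (Poly_Mapping.lookup x \<mu>) (a::'a::ring)"
  by (simp add: ad_def lookup_minus lookup_mult_const_left lookup_mult_const_right)

lemma ad_plus_ext_span_eq_zero_imp_center: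
  assumes M: "center_submodule_of_derivations s M"
    and direct: "inner_derivations \<inter> M = {\<lambda>a. 0}"
    and N: "N \<in> ext_span M" and zero: "\<And>p. ad x p + N p = 0"
  shows "x \<in> (center :: ('n, 'a::ring_1) mpoly set)"
proof (rule in_center_if_lookups_in_center)
  fix \<mu>
  have "ad x (Poly_Mapping.single 0 a) = - N (Poly_Mapping.single 0 a)" for a
    using zero by (simp add: eq_neg_iff_add_eq_0)
  then have "ad (Poly_Mapping.lookup x \<mu>) = (\<lambda>a. - Poly_Mapping.lookup (N (Poly_Mapping.single 0 a)) \<mu>)"
    by (simp add: fun_eq_iff lookup_ad_const[symmetric])
  also have "\<dots> \<in> M"
    by (rule center_submodule_uminus[OF M lookup_ext_span_const[OF M N]])
  finally have "ad (Poly_Mapping.lookup x \<mu>) \<in> inner_derivations \<inter> M"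
    by (simp add: inner_derivations_def)
  then show "Poly_Mapping.lookup x \<mu> \<in> center"
    using direct ad_eq_zero_iff_center by blast
qed

lemma sum_partial_var_var:
  "(\<Sum>j\<in>UNIV. z j * partial_var j (var k :: ('n::finite, 'a::ring_1) mpoly)) = z k"
  by (simp add: partial_var_var if_distrib[of "\<lambda>y. z _ * y"] cong: if_cong)

lemma derivations_poly_direct:
  fixes I N :: "('n::finite, 'a::ring_1) mpoly \<Rightarrow> ('n, 'a) mpoly"
  assumes M: "center_submodule_of_derivations s M"
    and direct: "inner_derivations \<inter> M = {\<lambda>a. 0}"
    and I: "I \<in> inner_derivations" and N: "N \<in> ext_span M"
    and zero: "(\<lambda>p. I p + N p + (\<Sum>j\<in>UNIV. z j * partial_var j p)) = (\<lambda>p. 0)"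
  shows "I = (\<lambda>p. 0) \<and> N = (\<lambda>p. 0) \<and> (\<forall>j. (\<lambda>p. z j * partial_var j p) = (\<lambda>p. 0))"
proof -
  have MD: "M \<subseteq> derivations s"
    using M unfolding center_submodule_of_derivations_def by blast
  obtain x where x: "I = ad x"
    using I unfolding inner_derivations_def by blast
  have z: "z k = 0" for k
  proof -
    show ?thesis
      using fun_cong[OF zero, of "var k"]
      by (simp add: x ad_central_eq_zero var_in_center ext_span_var[OF MD N] sum_partial_var_var)
  qed
  then have "ad x p + N p = 0" for p
    using fun_cong[OF zero, of p] by (simp add: x)
  then have "x \<in> center"
    by (rule ad_plus_ext_span_eq_zero_imp_center[OF M direct N])
  then have "I = (\<lambda>p. 0)"
    by (simp add: x ad_eq_zero_iff_center)
  with zero z show ?thesis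
    by (simp add: fun_eq_iff)
qed

context
  fixes sc :: "'k::field \<Rightarrow> 'a::ring_1 \<Rightarrow> 'a"
  assumes alg: "K_algebra sc"
begin

lemma coefficient_derivation:
  assumes D: "D \<in> derivations (poly_scal sc)"
  shows "(\<lambda>a. Poly_Mapping.lookup (D (Poly_Mapping.single 0 a :: ('n, 'a) mpoly)) \<mu>) \<in> derivations sc"
proof (rule derivationsI)
  show "additive (\<lambda>a. Poly_Mapping.lookup (D (Poly_Mapping.single 0 a :: ('n, 'a) mpoly)) \<mu>)"
    by (rule additive.intro) (simp add: single_add additive.add[OF derivationsD(1)[OF D]] lookup_add)
  show "Poly_Mapping.lookup (D (Poly_Mapping.single 0 (sc c a))) \<mu>
      = sc c (Poly_Mapping.lookup (D (Poly_Mapping.single 0 a)) \<mu>)" for c a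
    using derivationsD(2)[OF D, of c "Poly_Mapping.single 0 a"] by (simp add: alg lookup_poly_scal)
  show "Poly_Mapping.lookup (D (Poly_Mapping.single 0 (a * b))) \<mu>
      = Poly_Mapping.lookup (D (Poly_Mapping.single 0 a)) \<mu> * b
        + a * Poly_Mapping.lookup (D (Poly_Mapping.single 0 b)) \<mu>" for a b
    using derivationsD(3)[OF D, of "Poly_Mapping.single 0 a" "Poly_Mapping.single 0 b"]
    by (simp add: mult_single lookup_add lookup_mult_const_left lookup_mult_const_right)
qed

lemma keys_on_constants_finite:
  assumes fg: "finitely_generated_algebra sc" and D: "D \<in> derivations (poly_scal sc)"
  obtains F where "finite F" and "\<And>a. Poly_Mapping.keys (D (Poly_Mapping.single 0 a :: ('n, 'a) mpoly)) \<subseteq> F"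
proof -
  obtain S where S: "finite S" "subalg_gen sc S = UNIV"
    using fg unfolding finitely_generated_algebra_def by blast
  let ?F = "\<Union>s\<in>S. Poly_Mapping.keys (D (Poly_Mapping.single 0 s :: ('n, 'a) mpoly))"
  have keys: "\<mu> \<in> ?F" if "\<mu> \<in> Poly_Mapping.keys (D (Poly_Mapping.single 0 a))" for a \<mu>
  proof (rule ccontr)
    assume "\<mu> \<notin> ?F"
    then have "Poly_Mapping.lookup (D (Poly_Mapping.single 0 s)) \<mu> = 0" if "s \<in> S" for s
      using that by (auto simp: in_keys_iff)
    then have "Poly_Mapping.lookup (D (Poly_Mapping.single 0 a)) \<mu> = 0"
      using derivation_vanishes_on_subalg_gen[OF alg coefficient_derivation[OF D]] S(2) by blast
    with that show False
      by (simp add: in_keys_iff)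
  qed
  show thesis
  proof (rule that)
    show "finite ?F"
      using S(1) by simp
    show "Poly_Mapping.keys (D (Poly_Mapping.single 0 a)) \<subseteq> ?F" for a
      using keys by blast
  qed
qed

lemma derivation_vanishing_on_vars_decomp:
  assumes fg: "finitely_generated_algebra sc" and MD: "M \<subseteq> derivations sc"
    and dec: "derivations sc = {(\<lambda>a. I a + N a) | I N. I \<in> inner_derivations \<and> N \<in> M}"
    and D: "D \<in> derivations (poly_scal sc)" and vars: "\<And>j. D (var j :: ('n, 'a) mpoly) = 0"
  obtains x N where "N \<in> ext_span M" and "D = (\<lambda>p. ad x p + N p)"
proof -
  obtain F where F: "finite F" "\<And>a. Poly_Mapping.keys (D (Poly_Mapping.single 0 a)) \<subseteq> F"
    using keys_on_constants_finite[OF fg D] by blast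
  have "\<exists>x N. N \<in> M \<and> (\<lambda>a. Poly_Mapping.lookup (D (Poly_Mapping.single 0 a)) \<mu>) = (\<lambda>a. ad x a + N a)"
    for \<mu>
    using coefficient_derivation[OF D, of \<mu>] unfolding dec inner_derivations_def by blast
  then obtain xs Ns where Ns: "\<And>\<mu>. Ns \<mu> \<in> M"
    and coeff: "\<And>\<mu> a. Poly_Mapping.lookup (D (Poly_Mapping.single 0 a)) \<mu> = ad (xs \<mu>) a + Ns \<mu> a"
    by metis
  define x where "x = (\<Sum>\<mu>\<in>F. Poly_Mapping.single \<mu> (xs \<mu>) :: ('n, 'a) mpoly)"
  define N where "N = (\<lambda>p. \<Sum>\<mu>\<in>F. Poly_Mapping.single \<mu> 1 * coeff_ext (Ns \<mu>) p :: ('n, 'a) mpoly)"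
  have "(1::'a) \<in> center"
    by (simp add: center_def)
  then have N_span: "N \<in> ext_span M"
    unfolding N_def using F(1) Ns by (intro ext_span_finite_sum conjI single_in_center)
  have "D = (\<lambda>p. ad x p + N p)"
  proof (rule derivations_vanishing_on_vars_eqI[OF D _ vars])
    show "(\<lambda>p. ad x p + N p) \<in> derivations (poly_scal sc)"
      using N_span ext_span_subset_derivations[OF alg MD]
      by (intro derivations_add K_algebra_poly_scal alg ad_in_derivations) auto
    show "ad x (var j) + N (var j) = 0" for j
      by (simp add: ad_central_eq_zero var_in_center ext_span_var[OF MD N_span])
    fix a
    have Ns0: "Ns \<mu> 0 = 0" for \<mu>
      using Ns MD additive.zero[OF derivationsD(1)] by blast
    have "D (Poly_Mapping.single 0 a) = (\<Sum>\<mu>\<in>F. Poly_Mapping.single \<mu> (Poly_Mapping.lookup (D (Poly_Mapping.single 0 a)) \<mu>))"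
      by (rule poly_mapping_sum_single[OF F])
    also have "\<dots> = (\<Sum>\<mu>\<in>F. Poly_Mapping.single \<mu> (xs \<mu> * a) - Poly_Mapping.single \<mu> (a * xs \<mu>)
        + Poly_Mapping.single \<mu> (Ns \<mu> a))"
      by (simp add: coeff ad_def single_add single_diff)
    also have "\<dots> = ad x (Poly_Mapping.single 0 a) + N (Poly_Mapping.single 0 a)"
      unfolding ad_def x_def N_def
      by (simp add: sum_distrib_right sum_distrib_left mult_single coeff_ext_single Ns0 sum.distrib sum_subtractf)
    finally show "D (Poly_Mapping.single 0 a) = ad x (Poly_Mapping.single 0 a) + N (Poly_Mapping.single 0 a)" .
  qed
  with N_span show thesis
    by (rule that)
qed

lemma derivations_poly_decomp:
  assumes fg: "finitely_generated_algebra sc" and MD: "M \<subseteq> derivations sc"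
    and dec: "derivations sc = {(\<lambda>a. I a + N a) | I N. I \<in> inner_derivations \<and> N \<in> M}"
    and D: "D \<in> derivations (poly_scal sc :: _ \<Rightarrow> ('n::finite, 'a) mpoly \<Rightarrow> _)"
  obtains x N z where "D = (\<lambda>p. ad x p + N p + (\<Sum>j\<in>UNIV. z j * partial_var j p))"
    and "N \<in> ext_span M" and "\<And>j. z j \<in> center"
proof -
  define z where "z j = D (var j)" for j
  have z: "z j \<in> center" for j
    unfolding z_def by (rule derivation_var_in_center[OF D])
  define D' where "D' = (\<lambda>p. D p - (\<Sum>j\<in>UNIV. z j * partial_var j p))"
  have "D' \<in> derivations (poly_scal sc)"
    unfolding D'_def using z
    by (intro derivations_diff derivations_sum derivations_center_mult K_algebra_poly_scal alg D
      partial_var_in_derivations)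
  moreover have "D' (var k) = 0" for k
    by (simp add: D'_def z_def sum_partial_var_var)
  ultimately obtain x N where "N \<in> ext_span M" and "D' = (\<lambda>p. ad x p + N p)"
    by (rule derivation_vanishing_on_vars_decomp[OF fg MD dec])
  moreover have "D = (\<lambda>p. D' p + (\<Sum>j\<in>UNIV. z j * partial_var j p))"
    by (simp add: D'_def)
  ultimately show thesis
    using that z by blast
qed

lemma derivations_poly_combination_in:
  assumes MD: "M \<subseteq> derivations sc"
    and "I \<in> inner_derivations" and "N \<in> ext_span M" and "\<And>j. z j \<in> center"
  shows "(\<lambda>p. I p + N p + (\<Sum>j\<in>UNIV. z j * partial_var j p)) \<in> derivations (poly_scal sc)"
  using assms ext_span_subset_derivations[OF alg MD] unfolding inner_derivations_def
  by (auto intro!: derivations_add derivations_sum derivations_center_mult K_algebra_poly_scal alg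
    ad_in_derivations partial_var_in_derivations)

lemma derivations_poly_eq:
  assumes fg: "finitely_generated_algebra sc" and MD: "M \<subseteq> derivations sc"
    and dec: "derivations sc = {(\<lambda>a. I a + N a) | I N. I \<in> inner_derivations \<and> N \<in> M}"
  shows "derivations (poly_scal sc) =
    {(\<lambda>p. I p + N p + (\<Sum>j\<in>(UNIV :: 'n::finite set). z j * partial_var j p)) | I N z.
      I \<in> inner_derivations \<and> N \<in> ext_span M \<and> (\<forall>j. z j \<in> center)}"
    (is "_ = ?R")
proof (intro equalityI subsetI)
  fix D :: "('n, 'a) mpoly \<Rightarrow> ('n, 'a) mpoly"
  assume "D \<in> derivations (poly_scal sc)"
  then show "D \<in> ?R"
  proof (rule derivations_poly_decomp[OF fg MD dec])
    fix x N z
    assume "D = (\<lambda>p. ad x p + N p + (\<Sum>j\<in>UNIV. z j * partial_var j p))"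
      and "N \<in> ext_span M" and "\<And>j. z j \<in> center"
    then show "D \<in> ?R"
      by (intro CollectI exI[of _ "ad x"] exI[of _ N] exI[of _ z]) (simp add: inner_derivations_def)
  qed
next
  fix D
  assume "D \<in> ?R"
  then obtain I N z where "D = (\<lambda>p. I p + N p + (\<Sum>j\<in>UNIV. z j * partial_var j p))"
    and "I \<in> inner_derivations" and "N \<in> ext_span M" and "\<forall>j. z j \<in> center"
    by blast
  then show "D \<in> derivations (poly_scal sc)"
    by (simp add: derivations_poly_combination_in[OF MD])
qed

end

theorem theorem2p1:
  fixes sc :: "'k::field_char_0 \<Rightarrow> 'a::ring_1 \<Rightarrow> 'a"
    and M :: "('a \<Rightarrow> 'a) set"
  assumes alg: "K_algebra sc"
  shows "(center :: ('n::finite, 'a) mpoly set) = {p. \<forall>\<mu>. Poly_Mapping.lookup p \<mu> \<in> center}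
    \<and> (finitely_generated_algebra sc \<and>
         center_submodule_of_derivations sc M \<and>
         derivations sc = {(\<lambda>a. I a + N a) | I N. I \<in> inner_derivations \<and> N \<in> M} \<and>
         inner_derivations \<inter> M = {(\<lambda>a. 0)}
         \<longrightarrow>
         derivations (poly_scal sc) =
           {(\<lambda>p. I p + N p + (\<Sum>j\<in>(UNIV :: 'n set). z j * partial_var j p)) | I N z.
              I \<in> inner_derivations \<and> N \<in> ext_span M \<and> (\<forall>j. z j \<in> center)}
         \<and> (\<forall>I N (z :: 'n \<Rightarrow> ('n, 'a) mpoly).
              I \<in> inner_derivations \<and> N \<in> ext_span M \<and> (\<forall>j. z j \<in> center) \<and>
              (\<lambda>p. I p + N p + (\<Sum>j\<in>UNIV. z j * partial_var j p)) = (\<lambda>p. 0)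
              \<longrightarrow> I = (\<lambda>p. 0) \<and> N = (\<lambda>p. 0) \<and> (\<forall>j. (\<lambda>p. z j * partial_var j p) = (\<lambda>p. 0))))"
  apply (rule conjI)
  subgoal
    by (auto simp: center_poly_mapping_iff)
  apply (rule impI, elim conjE, rule conjI)
  subgoal
    by (rule derivations_poly_eq[OF alg]) (auto simp: center_submodule_of_derivations_def)
  subgoal
    by (intro allI impI, elim conjE) (rule derivations_poly_direct)
  done

end
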